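(* Let $I,J,J'\in\mathcal I$ be such that $J\vartriangleleft I$, $J'\vartriangleleft I$, and $J\neq J'$. Then at least one of the following holds: $J'\vartriangleleft J$; $J\vartriangleleft J'$; or there is $J''\in\mathcal I$ with $J''\vartriangleleft J$ and $J''\vartriangleleft J'$.
   Context: Let $(a_i)_{i=1,\dots,n}$ be a sequence of distinct integers between $1$ and $n$, and set $a_0=0$; write $A=(a_i)_{i=0,1,\dots,n}$. A set $I\subseteq\{0\}\cup[n]$ is feasible if $a_i<a_j$ for all $i,j\in I$ with $i<j$; $\mathcal I$ denotes the family of feasible sets of maximum cardinality. Patience sorting: start with empty piles $P_0,\dots,P_n$; for $i=0,1,\dots,n$ in order, put $a_i$ on top of the pile $P_j$ with smallest index $j$ such that $P_j$ is empty or the top element of $P_j$ is greater than $a_i$. Let $P_0,\dots,P_k$ be the resulting nonempty piles. Say $a_u$ is placed below $a_v$ on a pile if both lie on the same pile and $a_u$ was put there before $a_v$. For $I,J\in\mathcal I$, write $I\vartriangleleft J$ if $I\setminus J=\{u\}$ and $J\setminus I=\{v\}$ for some $u,v$ such that $a_u$ is placed strictly below $a_v$ on pile $P_i$ for some $1\le i\le k$. *)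

theory Defs
  imports Main
begin

text \<open>The sequence is a function a with a 0 = 0 and a 1, ..., a n distinct in {1..n}.
Piles are lists; the head of a pile is its top element. Pile j of the list has index j
(P_0 is the first pile).\<close>

definition feasible :: "(nat \<Rightarrow> nat) \<Rightarrow> nat \<Rightarrow> nat set \<Rightarrow> bool" where
  "feasible a n I \<longleftrightarrow> I \<subseteq> {0..n} \<and> (\<forall>i\<in>I. \<forall>j\<in>I. i < j \<longrightarrow> a i < a j)"

definition maxfeas :: "(nat \<Rightarrow> nat) \<Rightarrow> nat \<Rightarrow> nat set set" where
  "maxfeas a n = {I. feasible a n I \<and> (\<forall>J. feasible a n J \<longrightarrow> card J \<le> card I)}"

fun ins :: "nat \<Rightarrow> nat list list \<Rightarrow> nat list list" where
  "ins x [] = [[x]]"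
| "ins x (p # ps) = (if p = [] \<or> hd p > x then (x # p) # ps else p # ins x ps)"

definition piles :: "(nat \<Rightarrow> nat) \<Rightarrow> nat \<Rightarrow> nat list list" where
  "piles a n = foldl (\<lambda>ps k. ins (a k) ps) [] [0..<Suc n]"

text \<open>a_u is placed strictly below a_v on some pile P_i with 1 <= i <= k: both lie on
that pile and a_u was put there before a_v, i.e. at an earlier step u < v.\<close>
definition placed_below :: "(nat \<Rightarrow> nat) \<Rightarrow> nat \<Rightarrow> nat \<Rightarrow> nat \<Rightarrow> bool" where
  "placed_below a n u v \<longleftrightarrow> u \<le> n \<and> v \<le> n \<and> u < v \<and>
     (\<exists>i. 1 \<le> i \<and> i < length (piles a n) \<and>
          a u \<in> set (piles a n ! i) \<and> a v \<in> set (piles a n ! i))"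

definition tri :: "(nat \<Rightarrow> nat) \<Rightarrow> nat \<Rightarrow> nat set \<Rightarrow> nat set \<Rightarrow> bool" where
  "tri a n I J \<longleftrightarrow> (\<exists>u v. I - J = {u} \<and> J - I = {v} \<and> placed_below a n u v)"

end

(* Values decrease up a pile but increase along a feasible set, so a feasible set meets
   every pile at most once. Write J = I - {v} + {u} and J' = I - {v'} + {u'}, with u under v
   and u' under v'. If v = v', then u and u' lie on the pile of v, and J, J' are related by
   the exchange of u and u' in the order in which they were placed. The case u = u', v \<noteq> v'
   cannot occur, since v and v' would then be two elements of I on the pile of u. Otherwise
   K = I - {v, v'} + {u, u'} is feasible, because u < u' forces a u < a v' < a u' (and
   symmetrically), hence maximum, and K \<lhd> J, K \<lhd> J' by the exchanges (u', v') and (u, v). *)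

theory Submission
  imports Defs
begin

definition patience :: "nat list \<Rightarrow> nat list list" where
  "patience xs = foldl (\<lambda>ps x. ins x ps) [] xs"

lemma patience_Nil [simp]: "patience [] = []"
  by (simp add: patience_def)

lemma patience_snoc [simp]: "patience (xs @ [x]) = ins x (patience xs)"
  by (simp add: patience_def)

lemma piles_eq_patience: "piles a n = patience (map a [0..<Suc n])"
  by (simp add: piles_def patience_def foldl_map)

lemma set_concat_ins: "set (concat (ins x ps)) = insert x (set (concat ps))"
  by (induction ps) auto

lemma distinct_concat_ins:
  "x \<notin> set (concat ps) \<Longrightarrow> distinct (concat ps) \<Longrightarrow> distinct (concat (ins x ps))"
  by (induction ps) (auto simp: set_concat_ins simp del: set_concat)

lemma set_insE:
  assumes "q \<in> set (ins x ps)"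
  obtains "q \<in> set ps"
    | p where "q = x # p" "p \<in> set ps" "p = [] \<or> x < hd p"
    | "q = [x]"
  using assms by (induction ps) (auto split: if_splits)

lemma set_concat_patience: "set (concat (patience xs)) = set xs"
  by (induction xs rule: rev_induct) (simp_all add: set_concat_ins del: set_concat)

lemma distinct_concat_patience: "distinct xs \<Longrightarrow> distinct (concat (patience xs))"
  by (induction xs rule: rev_induct) (auto simp: distinct_concat_ins set_concat_patience simp del: set_concat)

lemma sorted_patience_pile: "p \<in> set (patience xs) \<Longrightarrow> sorted_wrt (<) p"
proof (induction xs arbitrary: p rule: rev_induct)
  case (snoc x xs)
  from snoc.prems[unfolded patience_snoc] show ?case
  proof (cases rule: set_insE)
    case (2 q)
    with snoc.IH[of q] show ?thesis by (cases q) auto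
  qed (auto intro: snoc.IH)
qed simp

lemma hd_le_if_sorted_wrt_less: "sorted_wrt (<) (q :: 'a::order list) \<Longrightarrow> y \<in> set q \<Longrightarrow> hd q \<le> y"
  by (cases q) auto

lemma patience_pile_antimono:
  assumes "distinct xs" "p \<in> set (patience xs)" "i < j" "j < length xs"
    and "xs ! i \<in> set p" "xs ! j \<in> set p"
  shows "xs ! j < xs ! i"
  using assms
proof (induction xs arbitrary: p rule: rev_induct)
  case (snoc x xs)
  have new: "x \<notin> set (concat (patience xs))"
    using snoc.prems(1) by (simp add: set_concat_patience del: set_concat)
  have xi: "(xs @ [x]) ! i = xs ! i" "xs ! i \<noteq> x"
    using snoc.prems(1,3,4) by (auto simp: nth_append)
  from snoc.prems(2)[unfolded patience_snoc] show ?case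
  proof (cases rule: set_insE)
    case 1
    then show ?thesis using snoc new by (cases "j < length xs") (auto simp: nth_append)
  next
    case (2 q)
    have "xs ! i \<in> set q" using 2 snoc.prems(5) xi by simp
    show ?thesis
    proof (cases "j < length xs")
      case True
      then have "xs ! j \<in> set q" using 2 snoc.prems(1,6) by (auto simp: nth_append)
      with True show ?thesis using snoc.IH[of q] 2 snoc.prems(1,3) xi \<open>xs ! i \<in> set q\<close>
        by (simp add: nth_append)
    next
      case False
      then have "(xs @ [x]) ! j = x" using snoc.prems(4) by (simp add: nth_append)
      moreover have "hd q \<le> xs ! i"
        using \<open>xs ! i \<in> set q\<close> 2 by (auto intro: hd_le_if_sorted_wrt_less sorted_patience_pile)
      ultimately show ?thesis using 2 xi \<open>xs ! i \<in> set q\<close> by auto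
    qed
  next
    case 3
    then show ?thesis using snoc.prems(5) xi by simp
  qed
qed simp

lemma distinct_concat_nth_eq:
  assumes "distinct (concat ps)" "i < length ps" "j < length ps"
    and "x \<in> set (ps ! i)" "x \<in> set (ps ! j)"
  shows "i = j"
  using assms
proof (induction ps arbitrary: i j)
  case (Cons p ps)
  have not_head: "x \<notin> set p" if "k < length ps" "x \<in> set (ps ! k)" for k
    using Cons.prems(1) nth_mem[OF that(1)] that(2) by (auto simp: disjoint_iff)
  show ?case
  proof (cases i)
    case 0
    then show ?thesis using Cons.prems not_head by (cases j) auto
  next
    case (Suc i')
    then show ?thesis using Cons.prems Cons.IH not_head by (cases j) auto
  qed
qed simp

definition same_pile :: "(nat \<Rightarrow> nat) \<Rightarrow> nat \<Rightarrow> nat \<Rightarrow> nat \<Rightarrow> bool" where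
  "same_pile a n x y \<longleftrightarrow> (\<exists>i. 1 \<le> i \<and> i < length (piles a n) \<and>
     a x \<in> set (piles a n ! i) \<and> a y \<in> set (piles a n ! i))"

lemma placed_below_iff_same_pile:
  "placed_below a n u v \<longleftrightarrow> u \<le> n \<and> v \<le> n \<and> u < v \<and> same_pile a n u v"
  unfolding placed_below_def same_pile_def ..

lemma same_pile_sym: "same_pile a n x y \<Longrightarrow> same_pile a n y x"
  unfolding same_pile_def by blast

lemma distinct_map_upt_Suc: "inj_on a {0..n} \<Longrightarrow> distinct (map a [0..<Suc n])"
  by (simp add: distinct_map atLeastLessThanSuc_atLeastAtMost del: upt_Suc)

lemma same_pile_trans:
  assumes "inj_on a {0..n}" "same_pile a n x y" "same_pile a n y z"
  shows "same_pile a n x z"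
proof -
  obtain i j where "i < length (piles a n)" "j < length (piles a n)"
    "a y \<in> set (piles a n ! i)" "a y \<in> set (piles a n ! j)"
    and xz: "1 \<le> i" "a x \<in> set (piles a n ! i)" "a z \<in> set (piles a n ! j)"
    using assms(2,3) unfolding same_pile_def by blast
  then have "i = j"
    using distinct_concat_nth_eq[OF distinct_concat_patience[OF distinct_map_upt_Suc[OF assms(1)]]]
    unfolding piles_eq_patience by blast
  with xz \<open>i < length (piles a n)\<close> show ?thesis
    unfolding same_pile_def by blast
qed

lemma same_pile_decreasing:
  assumes "inj_on a {0..n}" "same_pile a n x y" "x < y" "y \<le> n"
  shows "a y < a x"
proof -
  obtain i where "i < length (piles a n)" "a x \<in> set (piles a n ! i)" "a y \<in> set (piles a n ! i)"
    using assms(2) unfolding same_pile_def by blast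
  then show ?thesis
    using patience_pile_antimono[OF distinct_map_upt_Suc[OF assms(1)], of "piles a n ! i" x y] assms(3,4)
    unfolding piles_eq_patience by (simp del: upt_Suc)
qed

lemma inj_on_0_to_n:
  fixes a :: "nat \<Rightarrow> nat"
  assumes "a 0 = 0" "inj_on a {1..n}" "a ` {1..n} \<subseteq> {1..n}"
  shows "inj_on a {0..n}"
proof -
  have "{0..n} = insert 0 {1..n}" by auto
  moreover have "a 0 \<notin> a ` {1..n}" using assms(1,3) by auto
  ultimately show ?thesis using assms(2) by simp
qed

lemma feasible_subset: "feasible a n J \<Longrightarrow> K \<subseteq> J \<Longrightarrow> feasible a n K"
  unfolding feasible_def by blast

lemma feasible_insert:
  assumes "feasible a n J" "u \<le> n"
    and "\<And>x. x \<in> J \<Longrightarrow> x < u \<Longrightarrow> a x < a u" "\<And>x. x \<in> J \<Longrightarrow> u < x \<Longrightarrow> a u < a x"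
  shows "feasible a n (insert u J)"
  using assms unfolding feasible_def by auto

lemma feasible_same_pile_eq:
  assumes "inj_on a {0..n}" "feasible a n I" "x \<in> I" "y \<in> I" "same_pile a n x y"
  shows "x = y"
proof -
  have less: "a y < a x" if "x < y" "x \<in> I" "y \<in> I" "same_pile a n x y" for x y
    using same_pile_decreasing[OF assms(1) that(4,1)] that(3) assms(2)
    unfolding feasible_def by auto
  have incr: "a x < a y" if "x < y" "x \<in> I" "y \<in> I" for x y
    using assms(2) that unfolding feasible_def by blast
  show ?thesis
    using less[of x y] less[of y x] incr[of x y] incr[of y x] assms(3-5) same_pile_sym
    by (metis less_asym linorder_neq_iff)
qed

lemma exchange_in_maxfeas:
  assumes "J \<in> maxfeas a n" "v \<in> J" "u \<notin> J" "feasible a n (insert u (J - {v}))"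
  shows "insert u (J - {v}) \<in> maxfeas a n"
proof -
  have "finite J"
    using assms(1) unfolding maxfeas_def feasible_def by (auto intro: finite_subset)
  then have "card (insert u (J - {v})) = Suc (card (J - {v}))"
    using assms(3) by simp
  also have "\<dots> = card J"
    using \<open>finite J\<close> assms(2) by (rule card_Suc_Diff1)
  finally have "card (insert u (J - {v})) = card J" .
  then show ?thesis using assms(1,4) unfolding maxfeas_def by simp
qed

lemma triE:
  assumes "tri a n J I"
  obtains u v where "u \<notin> I" "v \<in> I" "J = insert u (I - {v})" "placed_below a n u v"
proof -
  obtain u v where uv: "J - I = {u}" "I - J = {v}" "placed_below a n u v"
    using assms unfolding tri_def by blast
  then have "u \<notin> I" "v \<in> I" "J = insert u (I - {v})"
    by (auto simp: set_eq_iff)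
  with uv(3) that show ?thesis by blast
qed

lemma tri_exchangeI:
  assumes "u \<notin> I" "v \<in> I" "placed_below a n u v"
  shows "tri a n (insert u (I - {v})) I"
proof -
  have "insert u (I - {v}) - I = {u}" "I - insert u (I - {v}) = {v}"
    using assms(1,2) by auto
  with assms(3) show ?thesis unfolding tri_def by blast
qed

lemma placed_below_if_common_top:
  assumes "inj_on a {0..n}" "placed_below a n u w" "placed_below a n u' w" "u < u'"
  shows "placed_below a n u u'"
  using assms same_pile_trans same_pile_sym unfolding placed_below_iff_same_pile by metis

lemma tri_if_same_removed:
  assumes "u \<notin> I" "u' \<notin> I" "placed_below a n u u'"
  shows "tri a n (insert u (I - {v})) (insert u' (I - {v}))"
proof -
  have "u \<noteq> u'" using assms(3) unfolding placed_below_def by simp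
  then have "tri a n (insert u (insert u' (I - {v}) - {u'})) (insert u' (I - {v}))"
    using assms by (intro tri_exchangeI) auto
  moreover have "insert u (insert u' (I - {v}) - {u'}) = insert u (I - {v})"
    using assms(2) by auto
  ultimately show ?thesis by simp
qed

lemma feasible_crossing_less:
  assumes "inj_on a {0..n}" "feasible a n J" "u \<in> J" "v' \<in> J" "placed_below a n u' v'" "u < u'"
  shows "a u < a u'"
proof -
  have "u' < v'" "v' \<le> n" "same_pile a n u' v'"
    using assms(5) unfolding placed_below_iff_same_pile by auto
  then have "a v' < a u'" using same_pile_decreasing[OF assms(1)] by blast
  moreover have "a u < a v'"
    using assms(2-4,6) \<open>u' < v'\<close> unfolding feasible_def by auto
  ultimately show ?thesis by simp
qed

lemma tri_common_lower_neighbour: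
  assumes inj: "inj_on a {0..n}"
    and J: "J \<in> maxfeas a n" "J = insert u (I - {v})"
    and J': "J' \<in> maxfeas a n" "J' = insert u' (I - {v'})"
    and I: "u \<notin> I" "u' \<notin> I" "v \<in> I" "v' \<in> I"
    and "u \<noteq> u'" "v \<noteq> v'" "placed_below a n u v" "placed_below a n u' v'"
  shows "\<exists>K\<in>maxfeas a n. tri a n K J \<and> tri a n K J'"
proof -
  have fJ: "feasible a n J" and fJ': "feasible a n J'"
    using J(1) J'(1) unfolding maxfeas_def by auto
  have mem: "u \<in> J" "v' \<in> J" "u' \<in> J'" "v \<in> J'"
    using J(2) J'(2) I \<open>u \<noteq> u'\<close> \<open>v \<noteq> v'\<close> by auto
  have less_u': "a x < a u'" if "x \<in> J - {v'}" "x < u'" for x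
  proof (cases "x = u")
    case True
    then show ?thesis
      using feasible_crossing_less[OF inj fJ mem(1,2) \<open>placed_below a n u' v'\<close>] that(2) by simp
  next
    case False
    then have "x \<in> J'" using that(1) J(2) J'(2) by auto
    with fJ' mem(3) that(2) show ?thesis unfolding feasible_def by blast
  qed
  have greater_u': "a u' < a x" if "x \<in> J - {v'}" "u' < x" for x
  proof (cases "x = u")
    case True
    then show ?thesis
      using feasible_crossing_less[OF inj fJ' mem(3,4) \<open>placed_below a n u v\<close>] that(2) by simp
  next
    case False
    then have "x \<in> J'" using that(1) J(2) J'(2) by auto
    with fJ' mem(3) that(2) show ?thesis unfolding feasible_def by blast
  qed
  define K where "K = insert u' (J - {v'})"
  have K_sym: "K = insert u (J' - {v})"
    unfolding K_def J(2) J'(2) using I \<open>u \<noteq> u'\<close> \<open>v \<noteq> v'\<close> by auto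
  have "u' \<le> n" using \<open>placed_below a n u' v'\<close> unfolding placed_below_def by simp
  with fJ less_u' greater_u' have "feasible a n K"
    unfolding K_def by (intro feasible_insert) (auto intro: feasible_subset)
  then have "K \<in> maxfeas a n"
    unfolding K_def using J I \<open>u \<noteq> u'\<close> \<open>v \<noteq> v'\<close> by (intro exchange_in_maxfeas) auto
  moreover have "tri a n K J"
    unfolding K_def using J(2) I \<open>u \<noteq> u'\<close> \<open>v \<noteq> v'\<close> \<open>placed_below a n u' v'\<close>
    by (intro tri_exchangeI) auto
  moreover have "tri a n K J'"
    unfolding K_sym using J'(2) I \<open>u \<noteq> u'\<close> \<open>v \<noteq> v'\<close> \<open>placed_below a n u v\<close>
    by (intro tri_exchangeI) auto
  ultimately show ?thesis by blast
qed

theorem lemma1: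
  fixes a :: "nat \<Rightarrow> nat" and n :: nat and I J J' :: "nat set"
  assumes "a 0 = 0"
    and "inj_on a {1..n}"
    and "a ` {1..n} \<subseteq> {1..n}"
    and "I \<in> maxfeas a n" and "J \<in> maxfeas a n" and "J' \<in> maxfeas a n"
    and "tri a n J I" and "tri a n J' I" and "J \<noteq> J'"
  shows "tri a n J' J \<or> tri a n J J' \<or>
         (\<exists>J''\<in>maxfeas a n. tri a n J'' J \<and> tri a n J'' J')"
proof -
  have inj: "inj_on a {0..n}" using assms(1-3) by (rule inj_on_0_to_n)
  obtain u v where uv: "u \<notin> I" "v \<in> I" "J = insert u (I - {v})" "placed_below a n u v"
    using \<open>tri a n J I\<close> by (rule triE)
  obtain u' v' where uv': "u' \<notin> I" "v' \<in> I" "J' = insert u' (I - {v'})" "placed_below a n u' v'"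
    using \<open>tri a n J' I\<close> by (rule triE)
  consider (same_removed) "v = v'" | (same_added) "u = u'" "v \<noteq> v'"
    | (disjoint) "u \<noteq> u'" "v \<noteq> v'" by blast
  then show ?thesis
  proof cases
    case same_removed
    with uv(3) uv'(3) \<open>J \<noteq> J'\<close> consider "u < u'" | "u' < u" by (auto simp: linorder_neq_iff)
    then show ?thesis
      using placed_below_if_common_top[OF inj] tri_if_same_removed uv uv' same_removed by metis
  next
    case same_added
    have "same_pile a n v v'"
      using uv(4) uv'(4) same_added(1) same_pile_trans[OF inj] same_pile_sym
      unfolding placed_below_iff_same_pile by metis
    then have "v = v'"
      using feasible_same_pile_eq[OF inj] uv(2) uv'(2) assms(4) unfolding maxfeas_def by blast
    with same_added(2) show ?thesis ..
  next
    case disjoint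
    then show ?thesis
      using tri_common_lower_neighbour[OF inj assms(5) uv(3) assms(6) uv'(3)] uv uv' by blast
  qed
qed

end
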